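(* Let $k\ge 2$ and let $\overline{x}\in\Sigma_k^*$ be a fixed point of $\mathcal P_k$. Let $b_1>b_2>\dots>b_r$ be the letters occurring in $\overline{x}$, and for $1\le j\le r$ let $n_j=\lfloor \log_k |\overline{x}|_{b_j}\rfloor$, so that $n_j+1$ is the number of base-$k$ digits of $|\overline{x}|_{b_j}$ (equivalently, $\overline{x}=A_1b_1A_2b_2\cdots A_rb_r$ where $A_j=[|\overline x|_{b_j}]_k$ is a word of length $n_j+1$ whose first letter is nonzero). Then \[\sum_{j=1}^{r} n_j\;\ge\;\sum_{j=1}^{r}k^{n_j}-2r.\]
   Context: Fix an integer $k\ge 2$ and the alphabet $\Sigma_k=\{0,1,\dots,k-1\}$. A word is a finite nonempty string of letters of $\Sigma_k$ (leading zeros allowed); $\Sigma_k^*$ denotes the set of words. For a word $x$, $|x|$ denotes its length and $|x|_i$ the number of occurrences of the letter $i$ in $x$. For a positive integer $c$, $[c]_k$ denotes its standard base-$k$ representation without leading zeros, viewed as a word over $\Sigma_k$; it has $\lfloor\log_k c\rfloor+1$ letters. The map $\mathcal P_k:\Sigma_k^*\to\Sigma_k^*$ is defined as follows: if $b_1>b_2>\dots>b_r$ are exactly the letters occurring in $x$ (i.e. those with $|x|_{b_j}\neq 0$), then $\mathcal P_k(x)=[|x|_{b_1}]_k\,b_1\,[|x|_{b_2}]_k\,b_2\cdots[|x|_{b_r}]_k\,b_r$ (concatenation). A fixed point is a word $x$ with $\mathcal P_k(x)=x$. *)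

theory Defs
  imports Complex_Main "HOL-Library.Multiset"
begin

definition is_word :: "nat \<Rightarrow> nat list \<Rightarrow> bool" where
  "is_word k x \<longleftrightarrow> x \<noteq> [] \<and> (\<forall>a\<in>set x. a < k)"

text \<open>Standard base-k representation of a positive integer (most significant digit first,
  no leading zeros).\<close>
fun base_repr :: "nat \<Rightarrow> nat \<Rightarrow> nat list" where
  "base_repr k c = (if k < 2 \<or> c < k then [c] else base_repr k (c div k) @ [c mod k])"

definition Pk :: "nat \<Rightarrow> nat list \<Rightarrow> nat list" where
  "Pk k x = concat (map (\<lambda>b. base_repr k (count_list x b) @ [b])
                        (rev (sorted_list_of_set (set x))))"

end

theory Submission
  imports Defs
begin

text \<open>A fixed point is as long as its image, so the letter counts c_j sum to
  |x| = \<Sum>_j (n_j + 2), because c_j has n_j + 1 base-k digits. Those digits also give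
  c_j \<ge> k^n_j, and summing yields the inequality.\<close>

lemma base_repr_bounds:
  assumes "k \<ge> 2" "c > 0"
  shows "length (base_repr k c) \<ge> 1 \<and> k ^ (length (base_repr k c) - 1) \<le> c
         \<and> c < k ^ length (base_repr k c)"
  using assms
proof (induction k c rule: base_repr.induct)
  case (1 k c)
  show ?case
  proof (cases "c < k")
    case True
    with "1.prems" show ?thesis by simp
  next
    case False
    with "1.prems" have "c div k > 0" by (simp add: div_greater_zero_iff)
    with False "1.prems" "1.IH" obtain L where
      L: "base_repr k c = base_repr k (c div k) @ [c mod k]" "L = length (base_repr k (c div k))"
      and IH: "L \<ge> 1" "k ^ (L - 1) \<le> c div k" "c div k < k ^ L"
      by auto
    have "k ^ L = k * k ^ (L - 1)"
      using IH(1) by (cases L) auto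
    also have "\<dots> \<le> k * (c div k)"
      using IH(2) by simp
    also have "\<dots> \<le> c"
      by simp
    finally have lower: "k ^ L \<le> c" .
    have "c = k * (c div k) + c mod k"
      by simp
    also have "\<dots> < k * (c div k + 1)"
      using mod_less_divisor[of k c] "1.prems" unfolding distrib_left by linarith
    also have "\<dots> \<le> k * k ^ L"
      using IH(3) by (intro mult_le_mono2) simp
    finally have upper: "c < k ^ Suc L"
      by simp
    from lower upper L show ?thesis
      by simp
  qed
qed

lemma floor_log_eq_length_base_repr:
  assumes "k \<ge> 2" "c > 0"
  shows "\<lfloor>log (real k) (real c)\<rfloor> = int (length (base_repr k c)) - 1"
proof -
  define L where "L = length (base_repr k c)"
  have L: "L \<ge> 1" "k ^ (L - 1) \<le> c" "c < k ^ (L - 1 + 1)"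
    using base_repr_bounds[OF assms] by (auto simp: L_def)
  then have "\<lfloor>log (real k) (real c)\<rfloor> = int (L - 1)"
    using floor_log_nat_eq_powr_iff[OF assms, of "L - 1"] by simp
  with L(1) show ?thesis
    by (simp add: L_def)
qed

lemma length_Pk:
  "length (Pk k x) = (\<Sum>b\<in>set x. length (base_repr k (count_list x b)) + 1)"
  unfolding Pk_def length_concat
  by (simp add: sum_list_distinct_conv_sum_set comp_def)

theorem theorem2:
  fixes k :: nat and x :: "nat list"
  assumes "k \<ge> 2"
    and "is_word k x"
    and "Pk k x = x"
  shows "(\<Sum>b\<in>set x. \<lfloor>log (real k) (real (count_list x b))\<rfloor>)
           \<ge> (\<Sum>b\<in>set x. (int k) ^ nat \<lfloor>log (real k) (real (count_list x b))\<rfloor>)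
              - 2 * int (card (set x))"
proof -
  define n where "n b = \<lfloor>log (real k) (real (count_list x b))\<rfloor>" for b
  have count_pos: "count_list x b > 0" if "b \<in> set x" for b
    using that count_list_0_iff[of x b] by auto
  have n_eq: "n b = int (length (base_repr k (count_list x b))) - 1" if "b \<in> set x" for b
    using floor_log_eq_length_base_repr[OF assms(1) count_pos[OF that]] by (simp add: n_def)
  have power_le_count: "int k ^ nat (n b) \<le> int (count_list x b)" if "b \<in> set x" for b
    using base_repr_bounds[OF assms(1) count_pos[OF that]] n_eq[OF that]
    by (simp add: nat_diff_distrib' flip: of_nat_power)
  have "(\<Sum>b\<in>set x. int k ^ nat (n b)) \<le> (\<Sum>b\<in>set x. int (count_list x b))"
    by (intro sum_mono power_le_count)
  also have "\<dots> = int (length x)"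
    using sum_count_set[of x "set x"] by (simp flip: of_nat_sum)
  also have "\<dots> = int (length (Pk k x))"
    using assms(3) by simp
  also have "\<dots> = (\<Sum>b\<in>set x. n b + 2)"
    unfolding length_Pk using n_eq by (simp add: of_nat_sum)
  finally show ?thesis
    by (simp add: sum.distrib n_def)
qed

end
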